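(* Let $I\subseteq\mathbb{R}$ be an open interval (possibly unbounded) and $\Sigma=I\times\mathbb{R}$. (i) If $F\in C^1(\Sigma,\mathbb{R}^2)$ is a non-singular map of the form $F(x,y)=\big(p_0(x),\,q_1(x)y+q_0(x)\big)$ with $p_0,q_0,q_1\in C^1(I,\mathbb{R})$, then $F$ is injective (hence invertible onto its image), and $q_1(x)\neq0$ for all $x\in I$. (ii) If $F(x,y)=\big(p_1(x)y+p_0(x),\,Q(x,y)\big)\in C^1(\Sigma,\mathbb{R}^2)$ is non-singular and $p_1(x)\neq0$ for all $x\in I$, then $F$ is injective. (iii) If $F(x,y)=\big(p_1(x)y+p_0(x),\,Q(x,y)\big)\in C^2(\Sigma,\mathbb{R}^2)$ is non-singular, then $p_1$ has no simple zeroes, i.e. there is no $x_0\in I$ with $p_1(x_0)=0\neq p_1'(x_0)$.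
   Context: For $F=(P,Q)$, $d_F=P_xQ_y-P_yQ_x$ is the Jacobian determinant; $F$ is non-singular if $d_F(x,y)\neq0$ for all $(x,y)\in\Sigma$. *)

theory Defs
  imports "HOL-Analysis.Analysis"
begin

definition C1_on2 :: "(real \<times> real \<Rightarrow> real) \<Rightarrow> (real \<times> real) set \<Rightarrow> bool" where
  "C1_on2 f S \<longleftrightarrow> (\<exists>fx fy. continuous_on S fx \<and> continuous_on S fy \<and>
     (\<forall>z\<in>S. (f has_derivative (\<lambda>h. fx z * fst h + fy z * snd h)) (at z)))"

definition C2_on2 :: "(real \<times> real \<Rightarrow> real) \<Rightarrow> (real \<times> real) set \<Rightarrow> bool" where
  "C2_on2 f S \<longleftrightarrow> (\<exists>fx fy. C1_on2 fx S \<and> C1_on2 fy S \<and>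
     (\<forall>z\<in>S. (f has_derivative (\<lambda>h. fx z * fst h + fy z * snd h)) (at z)))"

definition partial_x :: "(real \<times> real \<Rightarrow> real) \<Rightarrow> real \<times> real \<Rightarrow> real" where
  "partial_x f z = deriv (\<lambda>t. f (t, snd z)) (fst z)"

definition partial_y :: "(real \<times> real \<Rightarrow> real) \<Rightarrow> real \<times> real \<Rightarrow> real" where
  "partial_y f z = deriv (\<lambda>t. f (fst z, t)) (snd z)"

definition jac_det :: "(real \<times> real \<Rightarrow> real) \<Rightarrow> (real \<times> real \<Rightarrow> real) \<Rightarrow> real \<times> real \<Rightarrow> real" where
  "jac_det P Q z = partial_x P z * partial_y Q z - partial_y P z * partial_x Q z"

definition nonsingular :: "(real \<times> real \<Rightarrow> real) \<Rightarrow> (real \<times> real \<Rightarrow> real) \<Rightarrow> (real \<times> real) set \<Rightarrow> bool" where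
  "nonsingular P Q S \<longleftrightarrow> (\<forall>z\<in>S. jac_det P Q z \<noteq> 0)"

end

theory Submission
  imports Defs
begin

text \<open>
  (i) The Jacobian determinant of \<open>(p\<^sub>0(x), q\<^sub>1(x) y + q\<^sub>0(x))\<close> is
  \<open>p\<^sub>0'(x) q\<^sub>1(x)\<close>, so neither factor vanishes: by Rolle \<open>p\<^sub>0\<close> is injective on \<open>I\<close>,
  and \<open>y\<close> is then recovered from the second component.

  (ii) Since \<open>p\<^sub>1 \<noteq> 0\<close>, each level set \<open>P = c\<close> is the graph of
  \<open>y(x) = (c - p\<^sub>0(x)) / p\<^sub>1(x)\<close>. Differentiating \<open>P(x, y(x)) = c\<close> shows that
  \<open>P\<^sub>y \<cdot> d/dx Q(x, y(x)) = -d\<^sub>F \<noteq> 0\<close>, so \<open>Q\<close> is injective on every level set of \<open>P\<close>.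

  (iii) If \<open>p\<^sub>1(x\<^sub>0) = 0 \<noteq> p\<^sub>1'(x\<^sub>0)\<close>, then \<open>P\<^sub>y = p\<^sub>1(x\<^sub>0)\<close> vanishes on the line
  \<open>x = x\<^sub>0\<close>, while \<open>P\<^sub>x = p\<^sub>1'(x\<^sub>0) y + p\<^sub>0'(x\<^sub>0)\<close> vanishes at one point of it, where
  therefore \<open>d\<^sub>F = 0\<close>.
\<close>

lemma has_derivative_partials:
  fixes f :: "real \<times> real \<Rightarrow> real"
  assumes "f differentiable at (x, y)"
  shows "((\<lambda>t. f (t, y)) has_real_derivative partial_x f (x, y)) (at x)"
    and "((\<lambda>t. f (x, t)) has_real_derivative partial_y f (x, y)) (at y)"
    and "(f has_derivative (\<lambda>h. partial_x f (x, y) * fst h + partial_y f (x, y) * snd h)) (at (x, y))"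
proof -
  obtain D where D: "(f has_derivative D) (at (x, y))"
    using assms by (auto simp: differentiable_def)
  interpret D: linear D
    using D by (rule has_derivative_linear)
  have axes: "D (h, 0) = D (1, 0) * h" "D (0, h) = D (0, 1) * h" for h
    using D.scale[of h "(1, 0)"] D.scale[of h "(0, 1)"] 
    by (simp_all only: scaleR_Pair real_scaleR_def mult_1_left mult_zero_left mult.commute)
  have scale: "(\<lambda>h. D (h, 0)) = (*) (D (1, 0))" "(\<lambda>h. D (0, h)) = (*) (D (0, 1))"
    by (rule ext, rule axes)+
  have "((\<lambda>t. (t, y)) has_derivative (\<lambda>h. h *\<^sub>R (1, 0))) (at x)"
    by (auto intro!: derivative_eq_intros)
  from diff_chain_at[OF this, simplified, OF D]
  have "((\<lambda>t. f (t, y)) has_real_derivative D (1, 0)) (at x)"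
    by (simp add: has_field_derivative_def o_def scale)
  moreover have "((\<lambda>t. (x, t)) has_derivative (\<lambda>h. h *\<^sub>R (0, 1))) (at y)"
    by (auto intro!: derivative_eq_intros)
  from diff_chain_at[OF this, simplified, OF D]
  have "((\<lambda>t. f (x, t)) has_real_derivative D (0, 1)) (at y)"
    by (simp add: has_field_derivative_def o_def scale)
  moreover have "D = (\<lambda>h. D (1, 0) * fst h + D (0, 1) * snd h)"
  proof
    fix h :: "real \<times> real"
    have "D h = D (fst h *\<^sub>R (1, 0) + snd h *\<^sub>R (0, 1))" by simp
    also have "\<dots> = fst h * D (1, 0) + snd h * D (0, 1)"
      by (simp only: D.add D.scale real_scaleR_def)
    finally show "D h = D (1, 0) * fst h + D (0, 1) * snd h" by (simp only: mult.commute)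
  qed
  ultimately show "((\<lambda>t. f (t, y)) has_real_derivative partial_x f (x, y)) (at x)"
    and "((\<lambda>t. f (x, t)) has_real_derivative partial_y f (x, y)) (at y)"
    and "(f has_derivative (\<lambda>h. partial_x f (x, y) * fst h + partial_y f (x, y) * snd h)) (at (x, y))"
    using D by (simp_all add: partial_x_def partial_y_def DERIV_imp_deriv)
qed

lemma has_real_derivative_along_graph:
  fixes f :: "real \<times> real \<Rightarrow> real"
  assumes "f differentiable at (t, y t)" and "(y has_real_derivative y') (at t)"
  shows "((\<lambda>s. f (s, y s)) has_real_derivative
           partial_x f (t, y t) + partial_y f (t, y t) * y') (at t)"
proof -
  have "((\<lambda>s. (s, y s)) has_derivative (\<lambda>h. (h, y' * h))) (at t)"
    using assms(2) unfolding has_field_derivative_def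
    by (auto intro!: has_derivative_Pair has_derivative_ident)
  from diff_chain_at[OF this has_derivative_partials(3)[OF assms(1)]]
  show ?thesis
    unfolding has_field_derivative_def o_def
    by (rule has_derivative_eq_rhs) (auto simp: algebra_simps)
qed

lemma jac_det_along_level_curve:
  fixes P Q :: "real \<times> real \<Rightarrow> real"
  assumes "P differentiable at (t, y t)" and "Q differentiable at (t, y t)"
    and y: "(y has_real_derivative y') (at t)"
    and level: "((\<lambda>s. P (s, y s)) has_real_derivative 0) (at t)"
  shows "partial_y P (t, y t) * (partial_x Q (t, y t) + partial_y Q (t, y t) * y')
           = - jac_det P Q (t, y t)"
proof -
  have "partial_x P (t, y t) = - partial_y P (t, y t) * y'"
    using DERIV_unique[OF has_real_derivative_along_graph[OF assms(1) y] level] by simp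
  then show ?thesis
    unfolding jac_det_def by (simp add: algebra_simps)
qed

lemma inj_on_if_has_real_derivative_nonzero:
  fixes g :: "real \<Rightarrow> real"
  assumes "is_interval I"
    and "\<And>x. x \<in> I \<Longrightarrow> (g has_real_derivative g' x) (at x)"
    and "\<And>x. x \<in> I \<Longrightarrow> g' x \<noteq> 0"
  shows "inj_on g I"
proof -
  have "g a \<noteq> g b" if "a \<in> I" "b \<in> I" "a < b" for a b
  proof
    assume "g a = g b"
    have sub: "{a..b} \<subseteq> I"
      using mem_is_interval_1_I[OF assms(1) \<open>a \<in> I\<close> \<open>b \<in> I\<close>] by auto
    have "continuous_on {a..b} g"
      using sub by (intro continuous_at_imp_continuous_on ballI DERIV_isCont[OF assms(2)]) auto
    moreover have "g differentiable (at x)" if "a < x" "x < b" for x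
    proof -
      have "x \<in> I" using sub that by auto
      then show ?thesis using assms(2) real_differentiable_def by blast
    qed
    ultimately obtain z where z: "a < z" "z < b" "(g has_real_derivative 0) (at z)"
      using Rolle[of a b g] \<open>a < b\<close> \<open>g a = g b\<close> by blast
    moreover have "z \<in> I" using sub z by auto
    ultimately show False
      using assms(2,3) DERIV_unique by metis
  qed
  then show ?thesis
    by (intro inj_onI) (metis linorder_neqE_linordered_idom)
qed

lemma C1_on2_imp_differentiable: "C1_on2 f S \<Longrightarrow> z \<in> S \<Longrightarrow> f differentiable at z"
  unfolding C1_on2_def differentiable_def by blast

lemma C2_on2_imp_C1_on2:
  assumes "C2_on2 f S"
  shows "C1_on2 f S"
proof -
  obtain fx fy where "C1_on2 fx S" "C1_on2 fy S"
    and f: "\<forall>z\<in>S. (f has_derivative (\<lambda>h. fx z * fst h + fy z * snd h)) (at z)"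
    using assms unfolding C2_on2_def by blast
  then have "continuous_on S fx" "continuous_on S fy"
    by (auto intro!: continuous_at_imp_continuous_on differentiable_imp_continuous_within
             dest: C1_on2_imp_differentiable)
  with f show ?thesis
    unfolding C1_on2_def by blast
qed

lemma differentiable_coeffs_if_affine_in_y:
  fixes p1 p0 :: "real \<Rightarrow> real"
  assumes "(\<lambda>z. p1 (fst z) * snd z + p0 (fst z)) differentiable at (x, 0)"
    and "(\<lambda>z. p1 (fst z) * snd z + p0 (fst z)) differentiable at (x, 1)"
  shows "p0 differentiable at x" and "p1 differentiable at x"
proof -
  have "(\<lambda>t. p1 t * 0 + p0 t) differentiable at x" and d1: "(\<lambda>t. p1 t * 1 + p0 t) differentiable at x"
    using has_derivative_partials(1)[OF assms(1)] has_derivative_partials(1)[OF assms(2)]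
    by (auto simp: real_differentiable_def)
  then show d0: "p0 differentiable at x"
    by simp
  from differentiable_diff[OF d1 d0] show "p1 differentiable at x"
    by simp
qed

lemma partial_y_affine_in_y:
  "partial_y (\<lambda>z. p1 (fst z) * snd z + p0 (fst z)) (x, y) = p1 x"
proof -
  have "((\<lambda>t. p1 x * t + p0 x) has_real_derivative p1 x) (at y)"
    by (auto intro!: derivative_eq_intros)
  then show ?thesis
    unfolding partial_y_def by (simp add: DERIV_imp_deriv)
qed

lemma partial_x_affine_in_y:
  assumes "p0 differentiable at x" and "p1 differentiable at x"
  shows "partial_x (\<lambda>z. p1 (fst z) * snd z + p0 (fst z)) (x, y) = deriv p1 x * y + deriv p0 x"
proof -
  have "((\<lambda>t. p1 t * y + p0 t) has_real_derivative deriv p1 x * y + deriv p0 x) (at x)"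
    using assms by (auto intro!: derivative_eq_intros simp: DERIV_deriv_iff_real_differentiable)
  then show ?thesis
    unfolding partial_x_def by (simp add: DERIV_imp_deriv)
qed

lemma inj_on_triangular_map:
  fixes p0 q0 q1 :: "real \<Rightarrow> real"
  assumes interval: "is_interval I" and p0: "\<And>x. x \<in> I \<Longrightarrow> p0 differentiable at x"
    and jac_nz: "nonsingular (\<lambda>z. p0 (fst z)) (\<lambda>z. q1 (fst z) * snd z + q0 (fst z)) (I \<times> UNIV)"
  shows "inj_on (\<lambda>z. (p0 (fst z), q1 (fst z) * snd z + q0 (fst z))) (I \<times> UNIV)"
    and "\<forall>x\<in>I. q1 x \<noteq> 0"
proof -
  have jac: "jac_det (\<lambda>z. p0 (fst z)) (\<lambda>z. q1 (fst z) * snd z + q0 (fst z)) (x, y) = deriv p0 x * q1 x"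
    for x y
    using partial_y_affine_in_y[of q1 q0 x y]
    by (simp add: jac_det_def partial_x_def partial_y_def)
  have nonzero: "deriv p0 x \<noteq> 0" "q1 x \<noteq> 0" if "x \<in> I" for x
    using jac_nz that jac[of x 0] by (auto simp: nonsingular_def)
  then show "\<forall>x\<in>I. q1 x \<noteq> 0"
    by blast
  have "inj_on p0 I"
    using interval p0 nonzero(1)
    by (intro inj_on_if_has_real_derivative_nonzero[where g' = "deriv p0"])
       (auto simp: DERIV_deriv_iff_real_differentiable)
  then show "inj_on (\<lambda>z. (p0 (fst z), q1 (fst z) * snd z + q0 (fst z))) (I \<times> UNIV)"
    using nonzero(2) by (auto simp: inj_on_def)
qed

lemma inj_on_affine_in_y_map:
  fixes p1 p0 :: "real \<Rightarrow> real" and Q :: "real \<times> real \<Rightarrow> real"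
  defines "P \<equiv> \<lambda>z. p1 (fst z) * snd z + p0 (fst z)"
  assumes "open I" and interval: "is_interval I"
    and P_diff: "\<And>z. z \<in> I \<times> UNIV \<Longrightarrow> P differentiable at z"
    and Q_diff: "\<And>z. z \<in> I \<times> UNIV \<Longrightarrow> Q differentiable at z"
    and jac_nz: "nonsingular P Q (I \<times> UNIV)" and p1: "\<forall>x\<in>I. p1 x \<noteq> 0"
  shows "inj_on (\<lambda>z. (p1 (fst z) * snd z + p0 (fst z), Q z)) (I \<times> UNIV)"
proof (rule inj_onI, clarsimp)
  fix x1 y1 x2 y2
  assume x1: "x1 \<in> I" and x2: "x2 \<in> I" and P_eq: "p1 x1 * y1 + p0 x1 = p1 x2 * y2 + p0 x2"
    and Q_eq: "Q (x1, y1) = Q (x2, y2)"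
  have coeffs: "p0 differentiable at t" "p1 differentiable at t" if "t \<in> I" for t
    using that P_diff[of "(t, 0)"] P_diff[of "(t, 1)"] unfolding P_def
    by (auto intro: differentiable_coeffs_if_affine_in_y)
  define c where "c = P (x1, y1)"
  define y where "y t = (c - p0 t) / p1 t" for t
  have P_level: "P (t, y t) = c" if "t \<in> I" for t
    using p1 that by (simp add: P_def y_def)
  have y_deriv: "(y has_real_derivative deriv y t) (at t)" if "t \<in> I" for t
    using coeffs[OF that] p1 that unfolding y_def[abs_def]
    by (auto intro!: derivative_eq_intros simp: DERIV_deriv_iff_real_differentiable)
  define g' where "g' t = partial_x Q (t, y t) + partial_y Q (t, y t) * deriv y t" for t
  have g: "((\<lambda>t. Q (t, y t)) has_real_derivative g' t) (at t)" if "t \<in> I" for t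
    unfolding g'_def using that by (intro has_real_derivative_along_graph Q_diff y_deriv) auto
  have "g' t \<noteq> 0" if "t \<in> I" for t
  proof -
    \<comment> \<open>\<open>y\<close> is junk outside \<open>I\<close>, so \<open>P (s, y s) = c\<close> holds only near \<open>t\<close>: this is where \<open>open I\<close> is used\<close>
    have "((\<lambda>s. P (s, y s)) has_real_derivative 0) (at t)"
      using has_field_derivative_transform_within_open[OF DERIV_const \<open>open I\<close> that] P_level
      by (metis (no_types, lifting))
    then have "partial_y P (t, y t) * g' t = - jac_det P Q (t, y t)"
      unfolding g'_def using that
      by (intro jac_det_along_level_curve P_diff Q_diff y_deriv) auto
    then show ?thesis
      using jac_nz that unfolding nonsingular_def by auto
  qed
  with g have "inj_on (\<lambda>t. Q (t, y t)) I"
    by (intro inj_on_if_has_real_derivative_nonzero[OF interval])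
  moreover have "y x1 = y1" "y x2 = y2"
    using p1 x1 x2 P_eq by (auto simp: y_def c_def P_def field_simps)
  ultimately have "x1 = x2"
    using x1 x2 Q_eq by (auto dest: inj_onD)
  then show "x1 = x2 \<and> y1 = y2"
    using P_eq p1 x1 by auto
qed

lemma nonsingular_affine_in_y_coeff_zero_imp_deriv_zero:
  fixes p1 p0 :: "real \<Rightarrow> real" and Q :: "real \<times> real \<Rightarrow> real"
  defines "P \<equiv> \<lambda>z. p1 (fst z) * snd z + p0 (fst z)"
  assumes "P differentiable at (x, 0)" and "P differentiable at (x, 1)"
    and jac_nz: "\<forall>y. jac_det P Q (x, y) \<noteq> 0" and "p1 x = 0"
  shows "deriv p1 x = 0"
proof (rule ccontr)
  assume "deriv p1 x \<noteq> 0"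
  have "p0 differentiable at x" "p1 differentiable at x"
    using differentiable_coeffs_if_affine_in_y assms(2,3) unfolding P_def by blast+
  define y where "y = - deriv p0 x / deriv p1 x"
  have "partial_x P (x, y) = 0"
    using partial_x_affine_in_y[OF \<open>p0 differentiable at x\<close> \<open>p1 differentiable at x\<close>]
      \<open>deriv p1 x \<noteq> 0\<close> by (simp add: P_def y_def)
  moreover have "partial_y P (x, y) = 0"
    using partial_y_affine_in_y \<open>p1 x = 0\<close> by (simp add: P_def)
  ultimately show False
    using jac_nz[rule_format, of y] by (simp add: jac_det_def)
qed

theorem lemma3:
  fixes I :: "real set"
  assumes "open I" and "is_interval I"
  shows "(\<forall>p0 q0 q1 :: real \<Rightarrow> real.
           p0 C1_differentiable_on I \<and> q0 C1_differentiable_on I \<and> q1 C1_differentiable_on I \<and>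
           C1_on2 (\<lambda>z. p0 (fst z)) (I \<times> UNIV) \<and>
           C1_on2 (\<lambda>z. q1 (fst z) * snd z + q0 (fst z)) (I \<times> UNIV) \<and>
           nonsingular (\<lambda>z. p0 (fst z)) (\<lambda>z. q1 (fst z) * snd z + q0 (fst z)) (I \<times> UNIV)
           \<longrightarrow> inj_on (\<lambda>z. (p0 (fst z), q1 (fst z) * snd z + q0 (fst z))) (I \<times> UNIV)
               \<and> (\<forall>x\<in>I. q1 x \<noteq> 0))
    \<and> (\<forall>(p1 :: real \<Rightarrow> real) (p0 :: real \<Rightarrow> real) (Q :: real \<times> real \<Rightarrow> real).
           C1_on2 (\<lambda>z. p1 (fst z) * snd z + p0 (fst z)) (I \<times> UNIV) \<and> C1_on2 Q (I \<times> UNIV) \<and>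
           nonsingular (\<lambda>z. p1 (fst z) * snd z + p0 (fst z)) Q (I \<times> UNIV) \<and>
           (\<forall>x\<in>I. p1 x \<noteq> 0)
           \<longrightarrow> inj_on (\<lambda>z. (p1 (fst z) * snd z + p0 (fst z), Q z)) (I \<times> UNIV))
    \<and> (\<forall>(p1 :: real \<Rightarrow> real) (p0 :: real \<Rightarrow> real) (Q :: real \<times> real \<Rightarrow> real).
           C2_on2 (\<lambda>z. p1 (fst z) * snd z + p0 (fst z)) (I \<times> UNIV) \<and> C2_on2 Q (I \<times> UNIV) \<and>
           nonsingular (\<lambda>z. p1 (fst z) * snd z + p0 (fst z)) Q (I \<times> UNIV)
           \<longrightarrow> \<not> (\<exists>x0\<in>I. p1 x0 = 0 \<and> deriv p1 x0 \<noteq> 0))"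
proof (intro conjI allI impI; elim conjE)
  fix p0 q0 q1 :: "real \<Rightarrow> real"
  assume p0: "p0 C1_differentiable_on I"
    and jac_nz: "nonsingular (\<lambda>z. p0 (fst z)) (\<lambda>z. q1 (fst z) * snd z + q0 (fst z)) (I \<times> UNIV)"
  have "\<And>x. x \<in> I \<Longrightarrow> p0 differentiable at x"
    using p0 by (simp add: C1_differentiable_on_eq)
  note triangular = inj_on_triangular_map[OF assms(2) this jac_nz]
  show "inj_on (\<lambda>z. (p0 (fst z), q1 (fst z) * snd z + q0 (fst z))) (I \<times> UNIV)"
    by (rule triangular(1))
  show "\<forall>x\<in>I. q1 x \<noteq> 0"
    by (rule triangular(2))
next
  fix p1 p0 :: "real \<Rightarrow> real" and Q :: "real \<times> real \<Rightarrow> real"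
  assume "C1_on2 (\<lambda>z. p1 (fst z) * snd z + p0 (fst z)) (I \<times> UNIV)" "C1_on2 Q (I \<times> UNIV)"
    "nonsingular (\<lambda>z. p1 (fst z) * snd z + p0 (fst z)) Q (I \<times> UNIV)" "\<forall>x\<in>I. p1 x \<noteq> 0"
  then show "inj_on (\<lambda>z. (p1 (fst z) * snd z + p0 (fst z), Q z)) (I \<times> UNIV)"
    using assms by (intro inj_on_affine_in_y_map) (auto intro: C1_on2_imp_differentiable)
next
  fix p1 p0 :: "real \<Rightarrow> real" and Q :: "real \<times> real \<Rightarrow> real"
  assume C2: "C2_on2 (\<lambda>z. p1 (fst z) * snd z + p0 (fst z)) (I \<times> UNIV)"
    and jac_nz: "nonsingular (\<lambda>z. p1 (fst z) * snd z + p0 (fst z)) Q (I \<times> UNIV)"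
  have "deriv p1 x = 0" if "x \<in> I" "p1 x = 0" for x
    using nonsingular_affine_in_y_coeff_zero_imp_deriv_zero[of p1 p0 x Q] that jac_nz
      C1_on2_imp_differentiable[OF C2_on2_imp_C1_on2[OF C2]]
    by (auto simp: nonsingular_def)
  then show "\<not> (\<exists>x0\<in>I. p1 x0 = 0 \<and> deriv p1 x0 \<noteq> 0)"
    by blast
qed

end
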